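(* Let $q=2$ and let $d,e$ be integers with $d\ge1$ and $e\ge d+1$. For all $0\le i\le d-1$ and $1\le j\le d$, $$|B_j(i)|>|B_j(i+1)|.$$
   Context: With $q=2$: for integers $m\ge 0$ and $l$, ${m\brack l}=\prod_{t=1}^{l}\frac{q^{m-t+1}-1}{q^t-1}$ for $l\ge0$ and $0$ for $l<0$. For $0\le i,j\le d$, $$B_j(i)=\sum_{h=0}^{\min\{j,d-i\}}(-1)^{j-h}q^{eh+\binom{j-h}{2}}{d-h\brack d-j}{d-i\brack h};$$ these are the eigenvalues of the bilinear forms graph $H_q(d,e,j)$ (vertices: $d\times e$ matrices over $\mathbb F_q$, adjacent iff their difference has rank $j$). *)

theory Defs
  imports Complex_Main
begin

text \<open>Gaussian binomial coefficient [m, l] with q = 2, for m \<ge> 0 and integer l,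
  by the product formula; zero for l < 0.  (Within the definition of B below
  only arguments with 0 \<le> l \<le> m occur, so truncated subtraction m - t + 1
  is harmless there.)\<close>
definition gbin :: "nat \<Rightarrow> int \<Rightarrow> real" where
  "gbin m l = (if l < 0 then 0 else
      (\<Prod>t\<in>{1..nat l}. (2 ^ (m - t + 1) - 1) / (2 ^ t - 1)))"

text \<open>Eigenvalues B_j(i) of the bilinear forms graph H_2(d,e,j).\<close>
definition B :: "nat \<Rightarrow> nat \<Rightarrow> nat \<Rightarrow> nat \<Rightarrow> real" where
  "B d e j i = (\<Sum>h=0..min j (d - i).
      (-1) ^ (j - h) * 2 ^ (e * h + ((j - h) choose 2))
      * gbin (d - h) (int d - int j) * gbin (d - i) (int h))"

end

theory Submission
  imports Defs
begin

text \<open>Put T_j(i) = (-1)^(max 0 (i + j - d)) B_j(i). The q-Pascal rule for Gaussian binomials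
  gives B^(d,e)_j(i) - B^(d,e)_j(i+1) = 2^(e+d-i-1) B^(d-1,e-1)_(j-1)(i). By induction on d
  and downward induction on i, T_j(i) is positive and strictly decreasing in i. While i + j < d
  the recursion adds a positive term. Otherwise T_j(i) = 2c T'(i) - T_j(i+1) with
  c = 2^(e+d-i-2), so it suffices that T_j(i+1) < c T'(i): for i + 1 < d this follows from the
  recursion one step further and the monotonicity of T', and for i + 1 = d it is an explicit
  estimate of Gaussian binomials that needs e > d.\<close>

lemma gbin_0 [simp]: "gbin m 0 = 1"
  by (simp add: gbin_def)

lemma gbin_Suc:
  "gbin m (int (Suc l)) = gbin m (int l) * (2 ^ (m - Suc l + 1) - 1) / (2 ^ Suc l - 1)"
proof -
  have "{1..Suc l} = insert (Suc l) {1..l}" by auto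
  then show ?thesis unfolding gbin_def by (simp del: of_nat_Suc)
qed

lemma power2_minus_1_pos: "0 < n \<Longrightarrow> (0::real) < 2 ^ n - 1"
  using one_less_power[of "2::real" n] by simp

lemma gbin_pos: "l \<le> m \<Longrightarrow> 0 < gbin m (int l)"
proof (induction l)
  case 0
  then show ?case by simp
next
  case (Suc l)
  have "(0::real) < 2 ^ (m - Suc l + 1) - 1" "(0::real) < 2 ^ Suc l - 1"
    by (rule power2_minus_1_pos, simp)+
  with Suc show ?case by (simp add: gbin_Suc del: of_nat_Suc)
qed

lemma gbin_Suc_top:
  "l \<le> m \<Longrightarrow> gbin (Suc m) (int l) * (2 ^ (Suc m - l) - 1) = gbin m (int l) * (2 ^ Suc m - 1)"
proof (induction l)
  case 0
  then show ?case by simp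
next
  case (Suc l)
  then have IH: "gbin (Suc m) (int l) * (2 ^ (Suc m - l) - 1) = gbin m (int l) * (2 ^ Suc m - 1)"
    by simp
  have "gbin (Suc m) (int (Suc l)) * (2 ^ (Suc m - Suc l) - 1)
      = gbin (Suc m) (int l) * (2 ^ (Suc m - l) - 1) * (2 ^ (Suc m - Suc l) - 1) / (2 ^ Suc l - 1)"
    using Suc.prems by (simp add: gbin_Suc Suc_diff_le del: of_nat_Suc)
  also have "\<dots> = gbin m (int l) * (2 ^ Suc m - 1) * (2 ^ (Suc m - Suc l) - 1) / (2 ^ Suc l - 1)"
    by (simp add: IH)
  also have "\<dots> = gbin m (int (Suc l)) * (2 ^ Suc m - 1)"
    using Suc.prems by (simp add: gbin_Suc Suc_diff_Suc del: of_nat_Suc)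
  finally show ?case .
qed

lemma gbin_diag [simp]: "gbin m (int m) = 1"
proof (induction m)
  case 0
  then show ?case by simp
next
  case (Suc m)
  have "gbin (Suc m) (int m) = 2 ^ Suc m - 1"
    using gbin_Suc_top[of m m] Suc.IH by simp
  then show ?case
    using power2_minus_1_pos[of "Suc m"] by (simp add: gbin_Suc del: of_nat_Suc)
qed

text \<open>For l > m the product defining gbin m l does not vanish (truncated subtraction makes
  the factor with t = m + 1 equal to 1), so the Pascal rule needs this truncation.\<close>
definition gbinom :: "nat \<Rightarrow> nat \<Rightarrow> real" where
  "gbinom m h = (if h \<le> m then gbin m (int h) else 0)"

lemma gbinom_Suc_Suc: "gbinom (Suc m) (Suc h) = gbinom m (Suc h) + 2 ^ (m - h) * gbinom m h"
proof (cases "h \<le> m")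
  case False
  then show ?thesis by (simp add: gbinom_def)
next
  case True
  have split: "(2::real) ^ Suc m = 2 ^ (m - h) * 2 ^ Suc h" "(2::real) ^ m = 2 ^ h * 2 ^ (m - h)"
    using True by (simp_all flip: power_add)
  have "gbinom (Suc m) (Suc h) = gbin (Suc m) (int h) * (2 ^ (Suc m - h) - 1) / (2 ^ Suc h - 1)"
    using True by (simp add: gbinom_def gbin_Suc Suc_diff_le del: of_nat_Suc)
  also have "\<dots> = gbin m (int h) * (2 ^ Suc m - 1) / (2 ^ Suc h - 1)"
    by (simp add: gbin_Suc_top True)
  also have "\<dots> = gbin m (int h) * (2 ^ (m - h) - 1) / (2 ^ Suc h - 1) + 2 ^ (m - h) * gbin m (int h)"
    using power2_minus_1_pos[of "Suc h"] by (simp add: field_simps split)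
  also have "\<dots> = gbinom m (Suc h) + 2 ^ (m - h) * gbinom m h"
    using True by (cases "h = m") (auto simp: gbinom_def gbin_Suc Suc_diff_Suc simp del: of_nat_Suc)
  finally show ?thesis .
qed

lemma sum_mult_gbinom_Suc:
  "(\<Sum>h=0..j. f h * gbinom (Suc m) h)
    = (\<Sum>h=0..j. f h * gbinom m h) + (\<Sum>h<j. f (Suc h) * 2 ^ (m - h) * gbinom m h)"
proof (induction j)
  case 0
  then show ?case by (simp add: gbinom_def)
next
  case (Suc j)
  then show ?case by (simp add: gbinom_Suc_Suc algebra_simps)
qed

definition B_coeff :: "nat \<Rightarrow> nat \<Rightarrow> nat \<Rightarrow> nat \<Rightarrow> real" where
  "B_coeff d e j h = (-1) ^ (j - h) * 2 ^ (e * h + ((j - h) choose 2)) * gbin (d - h) (int d - int j)"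

lemma B_eq_sum_gbinom: "B d e j i = (\<Sum>h=0..j. B_coeff d e j h * gbinom (d - i) h)"
proof -
  have "B d e j i = (\<Sum>h=0..min j (d - i). B_coeff d e j h * gbinom (d - i) h)"
    unfolding B_def B_coeff_def by (rule sum.cong) (auto simp: gbinom_def)
  also have "\<dots> = (\<Sum>h=0..j. B_coeff d e j h * gbinom (d - i) h)"
    by (rule sum.mono_neutral_left) (auto simp: gbinom_def)
  finally show ?thesis .
qed

lemma B_diff:
  assumes "i \<le> d"
  shows "B (Suc d) (Suc e) (Suc j) i - B (Suc d) (Suc e) (Suc j) (Suc i)
    = 2 ^ (e + d - i + 1) * B d e j i"
proof -
  have coeff: "B_coeff (Suc d) (Suc e) (Suc j) (Suc h) * 2 ^ (d - i - h) * gbinom (d - i) h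
      = 2 ^ (e + d - i + 1) * (B_coeff d e j h * gbinom (d - i) h)" for h
  proof (cases "h \<le> d - i")
    case False
    then show ?thesis by (simp add: gbinom_def)
  next
    case True
    then have "Suc e * Suc h + ((j - h) choose 2) + (d - i - h) = (e + d - i + 1) + (e * h + ((j - h) choose 2))"
      using assms by simp
    then have "(2::real) ^ (Suc e * Suc h + ((j - h) choose 2)) * 2 ^ (d - i - h)
        = 2 ^ (e + d - i + 1) * 2 ^ (e * h + ((j - h) choose 2))"
      by (metis power_add)
    then show ?thesis by (simp add: B_coeff_def algebra_simps)
  qed
  have "B (Suc d) (Suc e) (Suc j) i - B (Suc d) (Suc e) (Suc j) (Suc i)
      = (\<Sum>h<Suc j. B_coeff (Suc d) (Suc e) (Suc j) (Suc h) * 2 ^ (d - i - h) * gbinom (d - i) h)"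
    using assms by (simp only: B_eq_sum_gbinom Suc_diff_le diff_Suc_Suc sum_mult_gbinom_Suc)
  also have "\<dots> = (\<Sum>h<Suc j. 2 ^ (e + d - i + 1) * (B_coeff d e j h * gbinom (d - i) h))"
    by (simp only: coeff)
  also have "\<dots> = 2 ^ (e + d - i + 1) * B d e j i"
    by (simp add: B_eq_sum_gbinom sum_distrib_left atLeast0AtMost lessThan_Suc_atMost)
  finally show ?thesis .
qed

lemma B_zero: "i \<le> d \<Longrightarrow> B d e 0 i = 1"
  by (simp add: B_def binomial_eq_0)

lemma B_top: "B d e j d = (-1) ^ j * 2 ^ (j choose 2) * gbin d (int d - int j)"
  by (simp add: B_def binomial_eq_0)

lemma gbin_Suc_lt:
  assumes "l \<le> n"
  shows "2 ^ (n - l) * gbin (Suc n) (int l) < 2 ^ Suc n * gbin n (int l)"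
proof -
  have ratio: "gbin (Suc n) (int l) * (2 * 2 ^ (n - l) - 1) = gbin n (int l) * (2 ^ Suc n - 1)"
    using gbin_Suc_top[OF assms] assms by (simp add: Suc_diff_le)
  have "(1::real) \<le> 2 ^ (n - l)" by simp
  then have "2 ^ (n - l) * gbin (Suc n) (int l) \<le> gbin (Suc n) (int l) * (2 * 2 ^ (n - l) - 1)"
    using gbin_pos[of l "Suc n"] assms by (simp add: algebra_simps)
  also have "\<dots> < 2 ^ Suc n * gbin n (int l)"
    using ratio gbin_pos[OF assms] by (simp add: algebra_simps)
  finally show ?thesis .
qed

text \<open>This is T_j(i): the truncated subtraction makes the sign +1 as long as i + j \<le> d.\<close>
definition signed_B :: "nat \<Rightarrow> nat \<Rightarrow> nat \<Rightarrow> nat \<Rightarrow> real" where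
  "signed_B d e j i = (-1) ^ (i + j - d) * B d e j i"

lemma abs_B_eq_abs_signed_B: "\<bar>B d e j i\<bar> = \<bar>signed_B d e j i\<bar>"
  by (simp add: signed_B_def abs_mult)

lemma signed_B_zero: "i \<le> d \<Longrightarrow> signed_B d e 0 i = 1"
  by (simp add: signed_B_def B_zero)

lemma signed_B_top: "j \<le> d \<Longrightarrow> signed_B d e j d = 2 ^ (j choose 2) * gbin d (int (d - j))"
  by (simp add: signed_B_def B_top of_nat_diff flip: power_add mult.assoc)

lemma signed_B_top_pos: "j \<le> d \<Longrightarrow> 0 < signed_B d e j d"
  using gbin_pos[of "d - j" d] by (simp add: signed_B_top)

lemma signed_B_top_lt:
  assumes "j \<le> d" "d < e"
  shows "signed_B (Suc d) (Suc e) (Suc j) (Suc d) < 2 ^ e * signed_B d e j d"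
proof -
  have "(2::real) ^ j * gbin (Suc d) (int (d - j)) < 2 ^ Suc d * gbin d (int (d - j))"
    using gbin_Suc_lt[of "d - j" d] assms by simp
  also have "\<dots> \<le> 2 ^ e * gbin d (int (d - j))"
    using assms gbin_pos[of "d - j" d] by (intro mult_right_mono power_increasing) auto
  finally have "2 ^ (j choose 2) * (2 ^ j * gbin (Suc d) (int (d - j)))
      < 2 ^ (j choose 2) * (2 ^ e * gbin d (int (d - j)))"
    by simp
  moreover have "Suc j choose 2 = j + (j choose 2)"
    by (simp add: numeral_2_eq_2)
  ultimately show ?thesis
    using assms by (simp add: signed_B_top power_add algebra_simps)
qed

lemma signed_B_rec_low:
  assumes "i + j < d"
  shows "signed_B (Suc d) (Suc e) (Suc j) i
    = signed_B (Suc d) (Suc e) (Suc j) (Suc i) + 2 ^ (e + d - i + 1) * signed_B d e j i"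
  using B_diff[of i d e j] assms by (simp add: signed_B_def)

lemma signed_B_rec_high:
  assumes "i \<le> d" "d \<le> i + j"
  shows "signed_B (Suc d) (Suc e) (Suc j) i
    = 2 ^ (e + d - i + 1) * signed_B d e j i - signed_B (Suc d) (Suc e) (Suc j) (Suc i)"
proof -
  have "Suc i + Suc j - Suc d = Suc (i + j - d)" "i + Suc j - Suc d = i + j - d"
    using assms by auto
  then show ?thesis
    using B_diff[OF assms(1), of e j] by (simp add: signed_B_def algebra_simps)
qed

lemma signed_B_Suc_lt:
  assumes "d < e" "j \<le> d" "i \<le> d" "d \<le> i + j"
    and pos: "i < d \<Longrightarrow> 0 < signed_B (Suc d) (Suc e) (Suc j) (Suc (Suc i))"
    and dec: "i < d \<Longrightarrow> 0 < j \<Longrightarrow> signed_B d e j (Suc i) < signed_B d e j i"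
  shows "signed_B (Suc d) (Suc e) (Suc j) (Suc i) < 2 ^ (e + d - i) * signed_B d e j i"
proof (cases "i = d")
  case True
  then show ?thesis using signed_B_top_lt assms by simp
next
  case False
  with assms have "i < d" "0 < j" by auto
  then have exp: "e + d - Suc i + 1 = e + d - i" by simp
  have "signed_B (Suc d) (Suc e) (Suc j) (Suc i)
      = 2 ^ (e + d - i) * signed_B d e j (Suc i) - signed_B (Suc d) (Suc e) (Suc j) (Suc (Suc i))"
    using signed_B_rec_high[of "Suc i" d j e, unfolded exp] \<open>i < d\<close> assms(4) by simp
  also have "\<dots> < 2 ^ (e + d - i) * signed_B d e j (Suc i)"
    using pos \<open>i < d\<close> by simp
  also have "\<dots> < 2 ^ (e + d - i) * signed_B d e j i"
    using dec \<open>i < d\<close> \<open>0 < j\<close> by simp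
  finally show ?thesis .
qed

lemma signed_B_lt:
  assumes "d < e" "j \<le> d" "i \<le> d"
    and "0 < signed_B (Suc d) (Suc e) (Suc j) (Suc i)" "0 < signed_B d e j i"
    and "i < d \<Longrightarrow> 0 < signed_B (Suc d) (Suc e) (Suc j) (Suc (Suc i))"
    and "i < d \<Longrightarrow> 0 < j \<Longrightarrow> signed_B d e j (Suc i) < signed_B d e j i"
  shows "signed_B (Suc d) (Suc e) (Suc j) (Suc i) < signed_B (Suc d) (Suc e) (Suc j) i"
proof (cases "i + j < d")
  case True
  then show ?thesis using signed_B_rec_low assms(5) by simp
next
  case False
  then have "signed_B (Suc d) (Suc e) (Suc j) i
      = 2 * (2 ^ (e + d - i) * signed_B d e j i) - signed_B (Suc d) (Suc e) (Suc j) (Suc i)"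
    using signed_B_rec_high[of i d j e] assms(3) by simp
  moreover have "signed_B (Suc d) (Suc e) (Suc j) (Suc i) < 2 ^ (e + d - i) * signed_B d e j i"
    using signed_B_Suc_lt False assms by simp
  ultimately show ?thesis by simp
qed

lemma signed_B_pos_decreasing:
  assumes "d < e"
  shows "(\<forall>j\<le>d. \<forall>i\<le>d. 0 < signed_B d e j i)
    \<and> (\<forall>j i. 0 < j \<longrightarrow> j \<le> d \<longrightarrow> i < d \<longrightarrow> signed_B d e j (Suc i) < signed_B d e j i)"
  using assms
proof (induction d arbitrary: e)
  case 0
  then show ?case by (simp add: signed_B_zero)
next
  case (Suc d)
  then obtain e' where e: "e = Suc e'" "d < e'" by (cases e) auto
  with Suc.IH have pos': "\<And>j i. j \<le> d \<Longrightarrow> i \<le> d \<Longrightarrow> 0 < signed_B d e' j i"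
    and dec': "\<And>j i. 0 < j \<Longrightarrow> j \<le> d \<Longrightarrow> i < d \<Longrightarrow> signed_B d e' j (Suc i) < signed_B d e' j i"
    by blast+
  have dec_step: "signed_B (Suc d) e (Suc j) (Suc i) < signed_B (Suc d) e (Suc j) i"
    if "j \<le> d" "i \<le> d" "0 < signed_B (Suc d) e (Suc j) (Suc i)"
      "i < d \<Longrightarrow> 0 < signed_B (Suc d) e (Suc j) (Suc (Suc i))" for i j
    unfolding e(1) using signed_B_lt[OF e(2)] that pos' dec' e(1) by simp
  have pos: "0 < signed_B (Suc d) e j i" if "j \<le> Suc d" "i \<le> Suc d" for j i
  proof (cases j)
    case 0
    then show ?thesis using that by (simp add: signed_B_zero)
  next
    case (Suc j')
    from that(2) have "0 < signed_B (Suc d) e j i \<and> (i < Suc d \<longrightarrow> 0 < signed_B (Suc d) e j (Suc i))"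
    proof (induction i rule: inc_induct)
      case base
      then show ?case using that(1) by (simp add: signed_B_top_pos)
    next
      case (step i)
      then show ?case using dec_step[of j' i] Suc that(1) by fastforce
    qed
    then show ?thesis by blast
  qed
  show ?case
    using pos dec_step by (auto simp: gr0_conv_Suc)
qed

theorem theorem4p6:
  fixes d e i j :: nat
  assumes "d \<ge> 1" and "e \<ge> d + 1" and "i \<le> d - 1" and "1 \<le> j" and "j \<le> d"
  shows "\<bar>B d e j i\<bar> > \<bar>B d e j (i + 1)\<bar>"
proof -
  have "i < d" "d < e" using assms by auto
  with signed_B_pos_decreasing assms
  have "0 < signed_B d e j (Suc i)" "signed_B d e j (Suc i) < signed_B d e j i"
    by auto
  then show ?thesis by (simp add: abs_B_eq_abs_signed_B[of d e j])
qed

end
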